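(* Consider the two-agent series component maintenance game with repair costs $C_1,C_2>0$ and prior working probabilities $0<p_1,p_2<1$, and write $\overline{p}=1-p$. Let $R\subset\mathbb{R}^+\times\mathbb{R}^+$ be the set of pairs $(x,y)$ satisfying $x\le\overline{p_1}$, $y\le\overline{p_2}$, and ($x\le\overline{p_1}p_2$ or $y\le\overline{p_2}p_1$). Let $s^*=\min_{(x,y)\in R}\|(C_1,C_2)-(x,y)\|_1$. Then for every $s>s^*$ there exists a subsidy scheme $\mathbb{S}$ with total subsidy $s$ such that the system functions (i.e. $\phi(\bm{x}')=1$, both components work after the actions) in every pure Nash equilibrium of the subsidized game. Moreover, any subsidy scheme that guarantees the system functions in every pure Nash equilibrium has total subsidy at least $s^*$.
   Context: Two-agent series component maintenance game: agent $i\in\{1,2\}$ owns component $i$ with independent random state $x_i\in\{0,1\}$, $\Pr[x_i=1]=p_i$; action $s_i\in\{0,1\}$ (1 = repair RE, 0 = do nothing DN); post-action state $x_i'=\max\{x_i,s_i\}$; system state $\phi(\bm{x}')=x_1'\wedge x_2'$. Expected cost of agent $i$: $l_i(s)=C_is_i+1-\Pr[x_1'=x_2'=1]$. Explicitly, (agent 1, agent 2) costs are: DN-DN: $(1-p_1p_2,1-p_1p_2)$; DN-RE: $(\overline{p_1},\overline{p_1}+C_2)$; RE-DN: $(\overline{p_2}+C_1,\overline{p_2})$; RE-RE: $(C_1,C_2)$. Subsidy schemes subsidize repair: agent $i$ receives a nonnegative amount $\sigma_i$ when it repairs, so its subsidized cost is $l_i(s)-\sigma_is_i$; the total subsidy of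 the scheme is $\sigma_1+\sigma_2$. *)

theory Defs
  imports Complex_Main
begin

text \<open>Two-agent series component maintenance game. Actions are booleans:
  True = repair (RE), False = do nothing (DN). A pure strategy profile is a pair
  (a1, a2).\<close>

text \<open>Probability that component i works after action a: x_i' = max x_i s_i.\<close>
definition work_prob :: "real \<Rightarrow> bool \<Rightarrow> real" where
  "work_prob p a = (if a then 1 else p)"

text \<open>Pr[phi(x') = 1] = Pr[x_1' = x_2' = 1] (independent components).\<close>
definition sys_prob :: "real \<Rightarrow> real \<Rightarrow> bool \<times> bool \<Rightarrow> real" where
  "sys_prob p1 p2 a = work_prob p1 (fst a) * work_prob p2 (snd a)"

definition cost1 :: "real \<Rightarrow> real \<Rightarrow> real \<Rightarrow> bool \<times> bool \<Rightarrow> real" where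
  "cost1 C1 p1 p2 a = C1 * of_bool (fst a) + 1 - sys_prob p1 p2 a"

definition cost2 :: "real \<Rightarrow> real \<Rightarrow> real \<Rightarrow> bool \<times> bool \<Rightarrow> real" where
  "cost2 C2 p1 p2 a = C2 * of_bool (snd a) + 1 - sys_prob p1 p2 a"

definition sub_cost1 :: "real \<Rightarrow> real \<Rightarrow> real \<Rightarrow> real \<Rightarrow> bool \<times> bool \<Rightarrow> real" where
  "sub_cost1 C1 p1 p2 \<sigma>1 a = cost1 C1 p1 p2 a - \<sigma>1 * of_bool (fst a)"

definition sub_cost2 :: "real \<Rightarrow> real \<Rightarrow> real \<Rightarrow> real \<Rightarrow> bool \<times> bool \<Rightarrow> real" where
  "sub_cost2 C2 p1 p2 \<sigma>2 a = cost2 C2 p1 p2 a - \<sigma>2 * of_bool (snd a)"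

definition is_PNE :: "real \<Rightarrow> real \<Rightarrow> real \<Rightarrow> real \<Rightarrow> real \<Rightarrow> real \<Rightarrow> bool \<times> bool \<Rightarrow> bool" where
  "is_PNE C1 C2 p1 p2 \<sigma>1 \<sigma>2 a \<longleftrightarrow>
     (\<forall>b. sub_cost1 C1 p1 p2 \<sigma>1 a \<le> sub_cost1 C1 p1 p2 \<sigma>1 (b, snd a)) \<and>
     (\<forall>b. sub_cost2 C2 p1 p2 \<sigma>2 a \<le> sub_cost2 C2 p1 p2 \<sigma>2 (fst a, b))"

text \<open>The subsidy scheme (sigma1, sigma2) guarantees that the system functions
  (phi(x') = 1, almost surely) in every pure Nash equilibrium.\<close>
definition guarantees_functioning :: "real \<Rightarrow> real \<Rightarrow> real \<Rightarrow> real \<Rightarrow> real \<Rightarrow> real \<Rightarrow> bool" where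
  "guarantees_functioning C1 C2 p1 p2 \<sigma>1 \<sigma>2 \<longleftrightarrow>
     (\<forall>a. is_PNE C1 C2 p1 p2 \<sigma>1 \<sigma>2 a \<longrightarrow> sys_prob p1 p2 a = 1)"

definition regionR :: "real \<Rightarrow> real \<Rightarrow> (real \<times> real) set" where
  "regionR p1 p2 = {(x, y). 0 \<le> x \<and> 0 \<le> y \<and> x \<le> 1 - p1 \<and> y \<le> 1 - p2 \<and>
                       (x \<le> (1 - p1) * p2 \<or> y \<le> (1 - p2) * p1)}"

text \<open>s* = min over R of the l1 distance to (C1, C2) (the minimum is attained;
  we write it as an infimum).\<close>
definition sstar :: "real \<Rightarrow> real \<Rightarrow> real \<Rightarrow> real \<Rightarrow> real" where
  "sstar C1 C2 p1 p2 = Inf ((\<lambda>(x, y). \<bar>C1 - x\<bar> + \<bar>C2 - y\<bar>) ` regionR p1 p2)"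

end

theory Submission
  imports Defs
begin

text \<open>A subsidy only lowers agent i's repair cost to the residual cost ci = Ci - \<sigma>i.
  Comparing the unilateral deviations shows that DN-DN, RE-DN and DN-RE are excluded as
  equilibria exactly by the three constraints defining R, up to strictness on the boundary:
  the system is guaranteed to function if (c1, c2) lies strictly below a point of R, and
  only if (max c1 0, max c2 0) lies in R. Hence a scheme guaranteeing functioning moves
  (C1, C2) into R at l1-cost at most \<sigma>1 + \<sigma>2, and conversely any budget exceeding the
  l1-distance s* to R can be spent so as to land strictly below a point of R.\<close>

lemma is_PNE_DN_DN_iff:
  "is_PNE C1 C2 p1 p2 \<sigma>1 \<sigma>2 (False, False) \<longleftrightarrow>
     p2 * (1 - p1) \<le> C1 - \<sigma>1 \<and> p1 * (1 - p2) \<le> C2 - \<sigma>2"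
  by (simp add: is_PNE_def sub_cost1_def sub_cost2_def cost1_def cost2_def sys_prob_def
      work_prob_def all_bool_eq algebra_simps)

lemma is_PNE_RE_DN_iff:
  "is_PNE C1 C2 p1 p2 \<sigma>1 \<sigma>2 (True, False) \<longleftrightarrow>
     C1 - \<sigma>1 \<le> p2 * (1 - p1) \<and> 1 - p2 \<le> C2 - \<sigma>2"
  by (simp add: is_PNE_def sub_cost1_def sub_cost2_def cost1_def cost2_def sys_prob_def
      work_prob_def all_bool_eq algebra_simps)

lemma is_PNE_DN_RE_iff:
  "is_PNE C1 C2 p1 p2 \<sigma>1 \<sigma>2 (False, True) \<longleftrightarrow>
     1 - p1 \<le> C1 - \<sigma>1 \<and> C2 - \<sigma>2 \<le> p1 * (1 - p2)"
  by (simp add: is_PNE_def sub_cost1_def sub_cost2_def cost1_def cost2_def sys_prob_def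
      work_prob_def all_bool_eq algebra_simps)

lemma sys_prob_eq_1_iff:
  assumes "0 \<le> p1" "p1 < 1" "0 \<le> p2" "p2 < 1"
  shows "sys_prob p1 p2 a = 1 \<longleftrightarrow> a = (True, True)"
proof -
  have "p1 * p2 < 1"
    using assms mult_strict_mono[of p1 1 p2 1] by simp
  then show ?thesis
    using assms by (cases a) (auto simp: sys_prob_def work_prob_def)
qed

lemma guarantees_functioningI:
  assumes "(x, y) \<in> regionR p1 p2" "C1 - \<sigma>1 < x" "C2 - \<sigma>2 < y"
  shows "guarantees_functioning C1 C2 p1 p2 \<sigma>1 \<sigma>2"
  unfolding guarantees_functioning_def
proof (intro allI impI)
  fix a
  assume equilibrium: "is_PNE C1 C2 p1 p2 \<sigma>1 \<sigma>2 a"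
  have "C1 - \<sigma>1 < 1 - p1" "C2 - \<sigma>2 < 1 - p2"
    "C1 - \<sigma>1 < p2 * (1 - p1) \<or> C2 - \<sigma>2 < p1 * (1 - p2)"
    using assms by (auto simp: regionR_def mult.commute)
  then have "\<not> is_PNE C1 C2 p1 p2 \<sigma>1 \<sigma>2 (False, False)"
    "\<not> is_PNE C1 C2 p1 p2 \<sigma>1 \<sigma>2 (True, False)"
    "\<not> is_PNE C1 C2 p1 p2 \<sigma>1 \<sigma>2 (False, True)"
    unfolding is_PNE_DN_DN_iff is_PNE_RE_DN_iff is_PNE_DN_RE_iff by auto
  with equilibrium have "a = (True, True)"
    by (metis (full_types) prod.exhaust)
  then show "sys_prob p1 p2 a = 1"
    by (simp add: sys_prob_def work_prob_def)
qed

lemma guarantees_functioningD: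
  assumes "guarantees_functioning C1 C2 p1 p2 \<sigma>1 \<sigma>2"
    and "0 \<le> p1" "p1 < 1" "0 \<le> p2" "p2 < 1"
  shows "(max (C1 - \<sigma>1) 0, max (C2 - \<sigma>2) 0) \<in> regionR p1 p2"
proof -
  have "\<not> is_PNE C1 C2 p1 p2 \<sigma>1 \<sigma>2 a" if "a \<noteq> (True, True)" for a
    using assms that sys_prob_eq_1_iff unfolding guarantees_functioning_def by blast
  then have "\<not> is_PNE C1 C2 p1 p2 \<sigma>1 \<sigma>2 (False, False)"
    "\<not> is_PNE C1 C2 p1 p2 \<sigma>1 \<sigma>2 (True, False)"
    "\<not> is_PNE C1 C2 p1 p2 \<sigma>1 \<sigma>2 (False, True)"
    by auto
  moreover have "p2 * (1 - p1) \<le> 1 - p1" "p1 * (1 - p2) \<le> 1 - p2"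
    using assms by (simp_all add: mult_le_cancel_right1)
  ultimately have "C1 - \<sigma>1 \<le> 1 - p1" "C2 - \<sigma>2 \<le> 1 - p2"
    "C1 - \<sigma>1 < p2 * (1 - p1) \<or> C2 - \<sigma>2 < p1 * (1 - p2)"
    unfolding is_PNE_DN_DN_iff is_PNE_RE_DN_iff is_PNE_DN_RE_iff by linarith+
  moreover have "0 \<le> p2 * (1 - p1)" "0 \<le> p1 * (1 - p2)"
    using assms by simp_all
  ultimately show ?thesis
    using assms by (auto simp: regionR_def mult.commute)
qed

lemma sstar_le:
  assumes "(x, y) \<in> regionR p1 p2"
  shows "sstar C1 C2 p1 p2 \<le> \<bar>C1 - x\<bar> + \<bar>C2 - y\<bar>"
proof -
  have "bdd_below ((\<lambda>(x, y). \<bar>C1 - x\<bar> + \<bar>C2 - y\<bar>) ` regionR p1 p2)"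
    by (rule bdd_belowI[of _ 0]) auto
  then show ?thesis
    unfolding sstar_def using assms by (auto intro: cInf_lower2)
qed

lemma sstar_less_obtains_regionR:
  assumes "sstar C1 C2 p1 p2 < s" "0 \<le> p1" "p1 \<le> 1" "0 \<le> p2" "p2 \<le> 1"
  obtains x y where "(x, y) \<in> regionR p1 p2" "\<bar>C1 - x\<bar> + \<bar>C2 - y\<bar> < s"
proof -
  have "(0, 0) \<in> regionR p1 p2"
    using assms by (simp add: regionR_def)
  then have "(\<lambda>(x, y). \<bar>C1 - x\<bar> + \<bar>C2 - y\<bar>) ` regionR p1 p2 \<noteq> {}"
    by blast
  from cInf_lessD[OF this assms(1)[unfolded sstar_def]] show ?thesis
    using that by auto
qed

lemma subsidy_from_regionR:
  assumes "(x, y) \<in> regionR p1 p2" "\<bar>C1 - x\<bar> + \<bar>C2 - y\<bar> < s"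
  shows "\<exists>\<sigma>1 \<sigma>2. 0 \<le> \<sigma>1 \<and> 0 \<le> \<sigma>2 \<and> \<sigma>1 + \<sigma>2 = s \<and> guarantees_functioning C1 C2 p1 p2 \<sigma>1 \<sigma>2"
proof -
  define e where "e = s - (max (C1 - x) 0 + max (C2 - y) 0)"
  have "0 < e"
    using assms(2) unfolding e_def by linarith
  define \<sigma>1 where "\<sigma>1 = max (C1 - x) 0 + e / 2"
  define \<sigma>2 where "\<sigma>2 = max (C2 - y) 0 + e / 2"
  have "C1 - \<sigma>1 < x" "C2 - \<sigma>2 < y"
    using \<open>0 < e\<close> unfolding \<sigma>1_def \<sigma>2_def by auto
  then have "guarantees_functioning C1 C2 p1 p2 \<sigma>1 \<sigma>2"
    using assms(1) by (rule guarantees_functioningI[rotated])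
  moreover have "0 \<le> \<sigma>1" "0 \<le> \<sigma>2" "\<sigma>1 + \<sigma>2 = s"
    using \<open>0 < e\<close> unfolding \<sigma>1_def \<sigma>2_def e_def by auto
  ultimately show ?thesis
    by blast
qed

theorem theorem2:
  fixes C1 C2 p1 p2 :: real
  assumes "C1 > 0" and "C2 > 0"
    and "0 < p1" and "p1 < 1" and "0 < p2" and "p2 < 1"
  shows "(\<forall>s > sstar C1 C2 p1 p2. \<exists>\<sigma>1 \<sigma>2. 0 \<le> \<sigma>1 \<and> 0 \<le> \<sigma>2 \<and> \<sigma>1 + \<sigma>2 = s \<and>
             guarantees_functioning C1 C2 p1 p2 \<sigma>1 \<sigma>2)
       \<and> (\<forall>\<sigma>1 \<sigma>2. 0 \<le> \<sigma>1 \<longrightarrow> 0 \<le> \<sigma>2 \<longrightarrow> guarantees_functioning C1 C2 p1 p2 \<sigma>1 \<sigma>2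
             \<longrightarrow> sstar C1 C2 p1 p2 \<le> \<sigma>1 + \<sigma>2)"
proof (intro conjI allI impI)
  fix s
  assume "sstar C1 C2 p1 p2 < s"
  then obtain x y where "(x, y) \<in> regionR p1 p2" "\<bar>C1 - x\<bar> + \<bar>C2 - y\<bar> < s"
    using assms by (auto elim: sstar_less_obtains_regionR)
  then show "\<exists>\<sigma>1 \<sigma>2. 0 \<le> \<sigma>1 \<and> 0 \<le> \<sigma>2 \<and> \<sigma>1 + \<sigma>2 = s \<and> guarantees_functioning C1 C2 p1 p2 \<sigma>1 \<sigma>2"
    by (rule subsidy_from_regionR)
next
  fix \<sigma>1 \<sigma>2 :: real
  assume "0 \<le> \<sigma>1" "0 \<le> \<sigma>2" "guarantees_functioning C1 C2 p1 p2 \<sigma>1 \<sigma>2"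
  then have "sstar C1 C2 p1 p2 \<le> \<bar>C1 - max (C1 - \<sigma>1) 0\<bar> + \<bar>C2 - max (C2 - \<sigma>2) 0\<bar>"
    using assms by (intro sstar_le guarantees_functioningD) auto
  also have "\<dots> \<le> \<sigma>1 + \<sigma>2"
    using \<open>0 \<le> \<sigma>1\<close> \<open>0 \<le> \<sigma>2\<close> assms by auto
  finally show "sstar C1 C2 p1 p2 \<le> \<sigma>1 + \<sigma>2" .
qed

end
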